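(* Let $\mathcal{C}$ be a binary linear $[n,k,d]$ code and let $s$ be an integer with $1\le s\le\min(d-1,n-k)$ such that $\mathrm{Aut}(\mathcal{C})$ is $s$-fold transitive. Then there exists a parity-check matrix $\mathbf{H}$ of $\mathcal{C}$ such that for every $b\le s$ and every $I\subseteq J$ with $1\le|I|\le b$, some $\pi\in\mathrm{Aut}(\mathcal{C})$ maps $I$ to a set $\pi(I)$ that is not a stopping set of $\mathbf{H}$; in particular, $b$-SAD sets of $\mathbf{H}$ exist for all $b\le s$.
   Context: Coordinates are indexed by $J=\{0,\ldots,n-1\}$. For a binary matrix, a row resolves a nonempty $I\subseteq J$ if its restriction to $I$ has Hamming weight exactly one; $I$ is a stopping set if no row resolves it. A parity-check matrix of $\mathcal{C}$ is an $(n-k)\times n$ binary matrix of full row rank whose row space is $\mathcal{C}^\perp$. $\mathrm{Aut}(\mathcal{C})$ is the group of permutations of $J$ mapping $\mathcal{C}$ onto itself. A permutation group on $J$ is $t$-fold transitive if for any two ordered $t$-tuples of distinct elements $(i_1,\ldots,i_t)$ and $(j_1,\ldots,j_t)$ of $J$ there is a group element mapping $i_r$ to $j_r$ for all $r$. For $b\le d-1$, a $b$-SAD set of $\mathbf{H}$ is a smallest set $S\subseteq\mathrm{Aut}(\mathcal{C})$ such that every $I\subseteq J$ with $1\le|I|\le b$ is mapped by some $\pi\in S$ to a set that is not a stopping set of $\mathbf{H}$. *)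

theory Defs
  imports "HOL-Combinatorics.Permutations"
begin

text \<open>Binary vectors of length n: functions nat => bool vanishing outside J = {..<n}.
  True represents 1, False represents 0.\<close>

definition bvecs :: "nat \<Rightarrow> (nat \<Rightarrow> bool) set" where
  "bvecs n = {x. \<forall>i. n \<le> i \<longrightarrow> \<not> x i}"

definition bzero :: "nat \<Rightarrow> bool" where
  "bzero = (\<lambda>i. False)"

definition badd :: "(nat \<Rightarrow> bool) \<Rightarrow> (nat \<Rightarrow> bool) \<Rightarrow> nat \<Rightarrow> bool" where
  "badd x y = (\<lambda>i. x i \<noteq> y i)"

definition hweight :: "nat \<Rightarrow> (nat \<Rightarrow> bool) \<Rightarrow> nat" where
  "hweight n x = card {i\<in>{..<n}. x i}"

definition binary_linear_code :: "nat \<Rightarrow> (nat \<Rightarrow> bool) set \<Rightarrow> bool" where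
  "binary_linear_code n C \<longleftrightarrow> C \<subseteq> bvecs n \<and> bzero \<in> C \<and>
     (\<forall>x\<in>C. \<forall>y\<in>C. badd x y \<in> C)"

definition is_nkd_code :: "nat \<Rightarrow> nat \<Rightarrow> nat \<Rightarrow> (nat \<Rightarrow> bool) set \<Rightarrow> bool" where
  "is_nkd_code n k d C \<longleftrightarrow> binary_linear_code n C \<and> card C = 2 ^ k \<and>
     (\<exists>x\<in>C. x \<noteq> bzero \<and> hweight n x = d) \<and>
     (\<forall>x\<in>C. x \<noteq> bzero \<longrightarrow> d \<le> hweight n x)"

definition dual_code :: "nat \<Rightarrow> (nat \<Rightarrow> bool) set \<Rightarrow> (nat \<Rightarrow> bool) set" where
  "dual_code n C = {y \<in> bvecs n. \<forall>x\<in>C. even (card {i\<in>{..<n}. x i \<and> y i})}"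

text \<open>Binary matrices with m rows and n columns: H r j is the entry in row r, column j.\<close>
definition bmatrix :: "nat \<Rightarrow> nat \<Rightarrow> (nat \<Rightarrow> nat \<Rightarrow> bool) \<Rightarrow> bool" where
  "bmatrix m n H \<longleftrightarrow> (\<forall>r j. (m \<le> r \<or> n \<le> j) \<longrightarrow> \<not> H r j)"

definition row_sum :: "(nat \<Rightarrow> nat \<Rightarrow> bool) \<Rightarrow> nat set \<Rightarrow> nat \<Rightarrow> bool" where
  "row_sum H R = (\<lambda>j. odd (card {r\<in>R. H r j}))"

definition row_space :: "nat \<Rightarrow> (nat \<Rightarrow> nat \<Rightarrow> bool) \<Rightarrow> (nat \<Rightarrow> bool) set" where
  "row_space m H = row_sum H ` Pow {..<m}"

text \<open>Full row rank over GF(2): the rows are linearly independent.\<close>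
definition full_row_rank :: "nat \<Rightarrow> (nat \<Rightarrow> nat \<Rightarrow> bool) \<Rightarrow> bool" where
  "full_row_rank m H \<longleftrightarrow> inj_on (row_sum H) (Pow {..<m})"

definition parity_check_matrix ::
  "nat \<Rightarrow> nat \<Rightarrow> (nat \<Rightarrow> bool) set \<Rightarrow> (nat \<Rightarrow> nat \<Rightarrow> bool) \<Rightarrow> bool" where
  "parity_check_matrix n k C H \<longleftrightarrow> bmatrix (n - k) n H \<and> full_row_rank (n - k) H \<and>
     row_space (n - k) H = dual_code n C"

definition resolves :: "(nat \<Rightarrow> nat \<Rightarrow> bool) \<Rightarrow> nat \<Rightarrow> nat set \<Rightarrow> bool" where
  "resolves H r I \<longleftrightarrow> I \<noteq> {} \<and> card {j\<in>I. H r j} = 1"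

definition stopping_set :: "nat \<Rightarrow> (nat \<Rightarrow> nat \<Rightarrow> bool) \<Rightarrow> nat set \<Rightarrow> bool" where
  "stopping_set m H I \<longleftrightarrow> \<not> (\<exists>r<m. resolves H r I)"

text \<open>Coordinate permutation: coordinate i of x is moved to position pi i.\<close>
definition perm_vec :: "(nat \<Rightarrow> nat) \<Rightarrow> (nat \<Rightarrow> bool) \<Rightarrow> nat \<Rightarrow> bool" where
  "perm_vec \<pi> x = x \<circ> inv \<pi>"

definition Aut :: "nat \<Rightarrow> (nat \<Rightarrow> bool) set \<Rightarrow> (nat \<Rightarrow> nat) set" where
  "Aut n C = {\<pi>. \<pi> permutes {..<n} \<and> perm_vec \<pi> ` C = C}"

text \<open>t-fold transitivity on J = {..<n}; ordered t-tuples of distinct elements as lists.\<close>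
definition t_transitive :: "nat \<Rightarrow> nat \<Rightarrow> (nat \<Rightarrow> nat) set \<Rightarrow> bool" where
  "t_transitive n t G \<longleftrightarrow> (\<forall>xs ys. length xs = t \<and> length ys = t \<and> distinct xs \<and> distinct ys \<and>
      set xs \<subseteq> {..<n} \<and> set ys \<subseteq> {..<n} \<longrightarrow> (\<exists>\<pi>\<in>G. map \<pi> xs = ys))"

definition SAD_covers ::
  "nat \<Rightarrow> nat \<Rightarrow> (nat \<Rightarrow> nat \<Rightarrow> bool) \<Rightarrow> nat \<Rightarrow> (nat \<Rightarrow> nat) set \<Rightarrow> bool" where
  "SAD_covers n k H b S \<longleftrightarrow> (\<forall>I. I \<subseteq> {..<n} \<and> 1 \<le> card I \<and> card I \<le> b \<longrightarrow>
      (\<exists>\<pi>\<in>S. \<not> stopping_set (n - k) H (\<pi> ` I)))"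

definition is_SAD_set ::
  "nat \<Rightarrow> nat \<Rightarrow> (nat \<Rightarrow> bool) set \<Rightarrow> (nat \<Rightarrow> nat \<Rightarrow> bool) \<Rightarrow> nat \<Rightarrow> (nat \<Rightarrow> nat) set \<Rightarrow> bool" where
  "is_SAD_set n k C H b S \<longleftrightarrow> S \<subseteq> Aut n C \<and> SAD_covers n k H b S \<and>
     (\<forall>S'. S' \<subseteq> Aut n C \<and> SAD_covers n k H b S' \<longrightarrow> card S \<le> card S')"

end

theory Submission imports Defs begin

(*
  Idea (the paper's): since every s <= d - 1 columns of a parity-check matrix of C are
  linearly independent, the dual code restricted to the first s coordinates is all of
  GF(2)^s.  Hence the dual code contains s vectors that look like the unit vectors on the
  first s coordinates; they are independent and can be extended to a basis of the dual
  code, i.e. to a parity-check matrix H whose upper-left s x s block is the identity.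
  Any set I with 1 <= |I| <= s is enlarged to an s-set X, and s-fold transitivity gives an
  automorphism moving X onto {0,...,s-1}; there the identity block resolves the image of I.
  SAD sets exist because the whole group Aut(C) already covers, so a smallest cover exists.
*)

section \<open>Binary vectors supported on a finite coordinate set\<close>

definition vecs_on :: "nat set \<Rightarrow> (nat \<Rightarrow> bool) set" where
  "vecs_on A = {x. \<forall>i. i \<notin> A \<longrightarrow> \<not> x i}"

definition dot :: "(nat \<Rightarrow> bool) \<Rightarrow> (nat \<Rightarrow> bool) \<Rightarrow> nat" where
  "dot x y = card {i. x i \<and> y i}"

definition orth :: "nat set \<Rightarrow> (nat \<Rightarrow> bool) set \<Rightarrow> (nat \<Rightarrow> bool) set" where
  "orth A C = {y \<in> vecs_on A. \<forall>x\<in>C. even (dot x y)}"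

definition subspace_on :: "nat set \<Rightarrow> (nat \<Rightarrow> bool) set \<Rightarrow> bool" where
  "subspace_on A C \<longleftrightarrow> C \<subseteq> vecs_on A \<and> bzero \<in> C \<and> (\<forall>x\<in>C. \<forall>y\<in>C. badd x y \<in> C)"

lemma bvecs_eq_vecs_on: "bvecs n = vecs_on {..<n}"
  unfolding bvecs_def vecs_on_def by auto

lemma binary_linear_code_subspace_on:
  "binary_linear_code n C \<Longrightarrow> subspace_on {..<n} C"
  unfolding binary_linear_code_def subspace_on_def bvecs_eq_vecs_on by auto

lemma even_card_sym_diff:
  assumes "finite X" "finite Y"
  shows "even (card ((X - Y) \<union> (Y - X))) \<longleftrightarrow> (even (card X) \<longleftrightarrow> even (card Y))"
proof -
  have "card X = card (X \<inter> Y) + card (X - Y)" "card Y = card (X \<inter> Y) + card (Y - X)"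
    using card_Int_Diff[OF assms(1), of Y] card_Int_Diff[OF assms(2), of X]
    by (simp_all add: Int_commute)
  moreover have "card ((X - Y) \<union> (Y - X)) = card (X - Y) + card (Y - X)"
    using assms by (intro card_Un_disjoint) auto
  ultimately show ?thesis by auto
qed

lemma dot_sym: "dot x y = dot y x"
  unfolding dot_def by (metis conj_commute)

lemma badd_cancel: "badd (badd x y) y = x"
  unfolding badd_def by auto

lemma badd_vecs_on: "x \<in> vecs_on A \<Longrightarrow> y \<in> vecs_on A \<Longrightarrow> badd x y \<in> vecs_on A"
  unfolding badd_def vecs_on_def by auto

lemma even_dot_badd:
  assumes "finite A" "y \<in> vecs_on A"
  shows "even (dot (badd x x') y) \<longleftrightarrow> (even (dot x y) \<longleftrightarrow> even (dot x' y))"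
proof -
  have fin: "finite {i. z i \<and> y i}" for z
    by (rule finite_subset[OF _ assms(1)]) (use assms(2) in \<open>auto simp: vecs_on_def\<close>)
  have sd: "{i. badd x x' i \<and> y i} =
      ({i. x i \<and> y i} - {i. x' i \<and> y i}) \<union> ({i. x' i \<and> y i} - {i. x i \<and> y i})"
    unfolding badd_def by auto
  show ?thesis
    unfolding dot_def sd by (rule even_card_sym_diff[OF fin fin])
qed

lemma card_vecs_on:
  assumes "finite A"
  shows "finite (vecs_on A)" "card (vecs_on A) = 2 ^ card A"
proof -
  have b: "bij_betw (\<lambda>x. {i. x i}) (vecs_on A) (Pow A)"
    by (rule bij_betw_byWitness[where f'="\<lambda>S i. i \<in> S"]) (auto simp: vecs_on_def)
  show "finite (vecs_on A)" "card (vecs_on A) = 2 ^ card A"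
    using bij_betw_finite[OF b] bij_betw_same_card[OF b] assms by (simp_all add: card_Pow)
qed

lemma subspace_on_finite: "finite A \<Longrightarrow> subspace_on A C \<Longrightarrow> finite C"
  unfolding subspace_on_def using card_vecs_on(1) finite_subset by blast

lemma subspace_on_orth:
  assumes "finite A" "C \<subseteq> vecs_on A"
  shows "subspace_on A (orth A C)"
  unfolding subspace_on_def
proof (intro conjI ballI)
  show "orth A C \<subseteq> vecs_on A" by (auto simp: orth_def)
  show "bzero \<in> orth A C" by (auto simp: orth_def vecs_on_def bzero_def dot_def)
  fix y y' assume y: "y \<in> orth A C" and y': "y' \<in> orth A C"
  have "even (dot x (badd y y'))" if x: "x \<in> C" for x
    using even_dot_badd[OF assms(1), of x y y'] x y y' assms(2)
    by (auto simp: orth_def dot_sym)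
  then show "badd y y' \<in> orth A C" using y y' badd_vecs_on by (auto simp: orth_def)
qed

section \<open>The counting identity |C| * |C^perp| = 2^|A|\<close>

text \<open>The character (-1)^(x.y).  Summing it over all pairs (x,y) in C x V(A) in the two
  possible orders yields the counting identity.\<close>
definition chi :: "(nat \<Rightarrow> bool) \<Rightarrow> (nat \<Rightarrow> bool) \<Rightarrow> int" where
  "chi x y = (if even (dot x y) then 1 else -1)"

lemma sum_zero_by_sign_reversal:
  assumes "bij_betw f X X" "\<And>x. x \<in> X \<Longrightarrow> g (f x) = - g x"
  shows "sum g X = (0::int)"
proof -
  have "sum g X = sum (\<lambda>x. g (f x)) X" using sum.reindex_bij_betw[OF assms(1), of g] by simp
  also have "\<dots> = - sum g X" using assms(2) by (simp add: sum_negf)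
  finally show ?thesis by simp
qed

lemma chi_sum_vecs_on:
  assumes fA: "finite A" and xV: "x \<in> vecs_on A"
  shows "(\<Sum>y\<in>vecs_on A. chi x y) = (if x = bzero then 2 ^ card A else 0)"
proof (cases "x = bzero")
  case True
  then show ?thesis using card_vecs_on[OF fA] by (simp add: chi_def dot_def bzero_def)
next
  case False
  then obtain i0 where xi: "x i0" unfolding bzero_def by auto
  define e where "e = (\<lambda>i. i = i0)"
  have eV: "e \<in> vecs_on A" using xi xV by (auto simp: vecs_on_def e_def)
  have "{i. e i \<and> x i} = {i0}" unfolding e_def using xi by auto
  then have odd_e: "odd (dot e x)" unfolding dot_def by simp
  have "sum (chi x) (vecs_on A) = 0"
  proof (rule sum_zero_by_sign_reversal[where f="\<lambda>y. badd y e"])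
    show "bij_betw (\<lambda>y. badd y e) (vecs_on A) (vecs_on A)"
      by (rule bij_betw_byWitness[where f'="\<lambda>y. badd y e"]) (auto simp: badd_cancel badd_vecs_on eV)
    show "chi x (badd y e) = - chi x y" if "y \<in> vecs_on A" for y
      using even_dot_badd[OF fA xV, of y e] odd_e by (auto simp: chi_def dot_sym)
  qed
  then show ?thesis using False by simp
qed

lemma chi_sum_subspace:
  assumes fA: "finite A" and L: "subspace_on A C" and yV: "y \<in> vecs_on A"
  shows "(\<Sum>x\<in>C. chi x y) = (if y \<in> orth A C then int (card C) else 0)"
proof (cases "y \<in> orth A C")
  case True
  then show ?thesis by (simp add: chi_def orth_def)
next
  case False
  then obtain x0 where x0: "x0 \<in> C" "odd (dot x0 y)" using yV orth_def by auto
  have "sum (\<lambda>x. chi x y) C = 0"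
  proof (rule sum_zero_by_sign_reversal[where f="\<lambda>x. badd x x0"])
    show "bij_betw (\<lambda>x. badd x x0) C C"
      by (rule bij_betw_byWitness[where f'="\<lambda>x. badd x x0"])
        (use L x0 in \<open>auto simp: badd_cancel subspace_on_def\<close>)
    show "chi (badd x x0) y = - chi x y" if "x \<in> C" for x
      using even_dot_badd[OF fA yV, of x x0] x0 by (auto simp: chi_def)
  qed
  then show ?thesis using False by simp
qed

lemma card_mult_card_orth:
  assumes fA: "finite A" and L: "subspace_on A C"
  shows "card C * card (orth A C) = 2 ^ card A"
proof -
  have CV: "C \<subseteq> vecs_on A" and z: "bzero \<in> C" using L by (auto simp: subspace_on_def)
  have fV: "finite (vecs_on A)" using card_vecs_on[OF fA] by simp
  have "(\<Sum>x\<in>C. \<Sum>y\<in>vecs_on A. chi x y) = (\<Sum>x\<in>C. if x = bzero then 2 ^ card A else 0)"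
    using chi_sum_vecs_on[OF fA] CV by (intro sum.cong) auto
  also have "\<dots> = 2 ^ card A" using subspace_on_finite[OF fA L] z by (simp add: sum.delta)
  finally have by_rows: "(\<Sum>x\<in>C. \<Sum>y\<in>vecs_on A. chi x y) = 2 ^ card A" .
  have "(\<Sum>y\<in>vecs_on A. \<Sum>x\<in>C. chi x y) =
      (\<Sum>y\<in>vecs_on A. if y \<in> orth A C then int (card C) else 0)"
    using chi_sum_subspace[OF fA L] by (intro sum.cong) auto
  also have "\<dots> = (\<Sum>y\<in>orth A C. int (card C))"
    using sum.inter_restrict[OF fV, of "\<lambda>y. int (card C)" "orth A C"]
    by (simp add: Int_absorb1 orth_def)
  finally have by_cols: "(\<Sum>y\<in>vecs_on A. \<Sum>x\<in>C. chi x y) = int (card (orth A C)) * int (card C)"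
    by simp
  have "int (card C * card (orth A C)) = (\<Sum>y\<in>vecs_on A. \<Sum>x\<in>C. chi x y)"
    using by_cols by simp
  also have "\<dots> = (\<Sum>x\<in>C. \<Sum>y\<in>vecs_on A. chi x y)" by (rule sum.swap[symmetric])
  also have "\<dots> = 2 ^ card A" by (rule by_rows)
  finally have "int (card C * card (orth A C)) = 2 ^ card A" .
  then show ?thesis by (metis of_nat_eq_of_nat_power_cancel_iff of_nat_numeral)
qed

lemma orth_orth:
  assumes fA: "finite A" and L: "subspace_on A C"
  shows "orth A (orth A C) = C"
proof -
  have CV: "C \<subseteq> vecs_on A" using L subspace_on_def by auto
  have L2: "subspace_on A (orth A C)" by (rule subspace_on_orth[OF fA CV])
  have L3: "subspace_on A (orth A (orth A C))"
    by (rule subspace_on_orth[OF fA]) (use L2 in \<open>auto simp: subspace_on_def\<close>)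
  have "card (orth A C) > 0"
    using L2 subspace_on_finite[OF fA L2] by (auto simp: subspace_on_def card_gt_0_iff)
  then have "card (orth A (orth A C)) = card C"
    using card_mult_card_orth[OF fA L] card_mult_card_orth[OF fA L2]
    by (metis mult.commute mult_left_cancel neq0_conv)
  moreover have "C \<subseteq> orth A (orth A C)" using CV by (auto simp: orth_def dot_sym)
  ultimately show ?thesis using subspace_on_finite[OF fA L3] card_subset_eq by metis
qed

lemma dual_code_eq_orth: "dual_code n C = orth {..<n} C"
proof -
  have "card {i\<in>{..<n}. x i \<and> y i} = dot x y" if "y \<in> bvecs n" for x y
  proof -
    have "{i\<in>{..<n}. x i \<and> y i} = {i. x i \<and> y i}"
      using that by (auto simp: bvecs_def not_le[symmetric])
    then show ?thesis by (simp add: dot_def)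
  qed
  then show ?thesis unfolding dual_code_def orth_def bvecs_eq_vecs_on[symmetric] by auto
qed

lemma card_dual_code:
  assumes "binary_linear_code n C" "card C = 2 ^ k"
  shows "k \<le> n" "card (orth {..<n} C) = 2 ^ (n - k)"
proof -
  have L: "subspace_on {..<n} C" by (rule binary_linear_code_subspace_on[OF assms(1)])
  let ?D = "orth {..<n} C"
  have prod: "2 ^ k * card ?D = 2 ^ n"
    using card_mult_card_orth[OF _ L] assms(2) by simp
  have LD: "subspace_on {..<n} ?D"
    by (rule subspace_on_orth) (use L in \<open>auto simp: subspace_on_def\<close>)
  have "card ?D \<ge> 1"
    using LD subspace_on_finite[OF _ LD] by (auto simp: subspace_on_def Suc_le_eq card_gt_0_iff)
  then have "(2::nat) ^ k \<le> 2 ^ n" using prod by (metis mult_le_mono2 mult.right_neutral)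
  then show kn: "k \<le> n" by simp
  have "2 ^ k * card ?D = 2 ^ k * 2 ^ (n - k)"
    using prod kn by (simp add: power_add[symmetric])
  then show "card ?D = 2 ^ (n - k)" by simp
qed

section \<open>Row spaces and extension of independent rows\<close>

lemma badd_row_sum:
  assumes "finite R1" "finite R2"
  shows "badd (row_sum H R1) (row_sum H R2) = row_sum H ((R1 - R2) \<union> (R2 - R1))"
proof
  fix j
  have sd: "{r\<in>(R1 - R2) \<union> (R2 - R1). H r j} =
      ({r\<in>R1. H r j} - {r\<in>R2. H r j}) \<union> ({r\<in>R2. H r j} - {r\<in>R1. H r j})"
    by auto
  show "badd (row_sum H R1) (row_sum H R2) j = row_sum H ((R1 - R2) \<union> (R2 - R1)) j"
    unfolding badd_def row_sum_def sd
    using even_card_sym_diff[of "{r\<in>R1. H r j}" "{r\<in>R2. H r j}"] assms by auto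
qed

lemma row_sum_insert:
  assumes "finite R" "m \<notin> R"
  shows "row_sum H (insert m R) = badd (row_sum H R) (H m)"
proof
  fix j
  show "row_sum H (insert m R) j = badd (row_sum H R) (H m) j"
  proof (cases "H m j")
    case True
    then have "{r\<in>insert m R. H r j} = insert m {r\<in>R. H r j}" by auto
    then show ?thesis using True assms by (simp add: row_sum_def badd_def)
  next
    case False
    then have "{r\<in>insert m R. H r j} = {r\<in>R. H r j}" by auto
    then show ?thesis using False by (simp add: row_sum_def badd_def)
  qed
qed

lemma row_sum_cong: "(\<And>r. r \<in> R \<Longrightarrow> H r = H' r) \<Longrightarrow> row_sum H R = row_sum H' R"
  unfolding row_sum_def by (metis (mono_tags, lifting) Collect_cong)

lemma row_space_cong: "(\<And>r. r < m \<Longrightarrow> H r = H' r) \<Longrightarrow> row_space m H = row_space m H'"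
  unfolding row_space_def by (intro image_cong refl row_sum_cong) auto

lemma row_space_Suc:
  "row_space (Suc m) H = row_space m H \<union> (\<lambda>x. badd x (H m)) ` row_space m H"
proof -
  have "row_sum H ` (insert m ` Pow {..<m}) = (\<lambda>x. badd x (H m)) ` row_sum H ` Pow {..<m}"
    unfolding image_image by (intro image_cong refl row_sum_insert) (auto intro: finite_subset)
  then show ?thesis unfolding row_space_def lessThan_Suc Pow_insert image_Un by simp
qed

lemma row_space_finite: "finite (row_space m H)"
  unfolding row_space_def by auto

lemma row_space_badd:
  assumes "x \<in> row_space m H" "y \<in> row_space m H"
  shows "badd x y \<in> row_space m H"
proof -
  obtain R1 R2 where R: "R1 \<subseteq> {..<m}" "R2 \<subseteq> {..<m}" "x = row_sum H R1" "y = row_sum H R2"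
    using assms by (auto simp: row_space_def)
  then have "finite R1" "finite R2" using finite_subset by auto
  then show ?thesis using R badd_row_sum[of R1 R2 H] unfolding row_space_def
    by (intro image_eqI[of _ _ "(R1 - R2) \<union> (R2 - R1)"]) auto
qed

lemma row_space_subset:
  assumes L: "subspace_on A D" and rows: "\<forall>r<m. H r \<in> D"
  shows "row_space m H \<subseteq> D"
  using rows
proof (induction m)
  case 0
  have "row_sum H {} = bzero" by (auto simp: row_sum_def bzero_def)
  then show ?case using L by (auto simp: row_space_def subspace_on_def)
next
  case (Suc m)
  then have "row_space m H \<subseteq> D" "H m \<in> D" by auto
  then show ?case using L unfolding row_space_Suc subspace_on_def by auto
qed

lemma full_row_rank_iff_card: "full_row_rank m H \<longleftrightarrow> card (row_space m H) = 2 ^ m"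
  unfolding full_row_rank_def row_space_def
  using card_image[of "row_sum H" "Pow {..<m}"] eq_card_imp_inj_on[of "Pow {..<m}" "row_sum H"]
  by (auto simp: card_Pow)

lemma full_row_rank_append:
  assumes v: "v \<notin> row_space m H" and rank: "full_row_rank m H"
  shows "full_row_rank (Suc m) (H(m := v))"
proof -
  let ?R = "row_space m H"
  have same: "row_space m (H(m := v)) = ?R" by (rule row_space_cong) auto
  have disj: "?R \<inter> (\<lambda>x. badd x v) ` ?R = {}"
  proof (rule ccontr)
    assume "?R \<inter> (\<lambda>x. badd x v) ` ?R \<noteq> {}"
    then obtain x where "x \<in> ?R" "badd x v \<in> ?R" by auto
    then have "badd x (badd x v) \<in> ?R" using row_space_badd by blast
    moreover have "badd x (badd x v) = v" unfolding badd_def by auto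
    ultimately show False using v by simp
  qed
  have inj: "inj_on (\<lambda>x. badd x v) ?R" by (rule inj_onI) (metis badd_cancel)
  have "card (row_space (Suc m) (H(m := v))) = card (?R \<union> (\<lambda>x. badd x v) ` ?R)"
    unfolding row_space_Suc same by simp
  also have "\<dots> = card ?R + card ((\<lambda>x. badd x v) ` ?R)"
    using disj row_space_finite by (intro card_Un_disjoint) auto
  also have "\<dots> = 2 ^ Suc m"
    using card_image[OF inj] rank by (simp add: full_row_rank_iff_card)
  finally show ?thesis by (simp add: full_row_rank_iff_card)
qed

lemma extend_independent_rows:
  assumes fA: "finite A" and L: "subspace_on A D" and cD: "card D = 2 ^ N"
  shows "\<forall>r<m. H r \<in> D \<Longrightarrow> full_row_rank m H \<Longrightarrow> m + j \<le> N \<Longrightarrow>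
     \<exists>H'. (\<forall>r<m. H' r = H r) \<and> (\<forall>r<m + j. H' r \<in> D) \<and> full_row_rank (m + j) H'"
proof (induction j arbitrary: m H)
  case 0
  then show ?case by auto
next
  case (Suc j)
  have "\<not> D \<subseteq> row_space m H"
  proof
    assume "D \<subseteq> row_space m H"
    then have "card D \<le> card (row_space m H)" using row_space_finite card_mono by blast
    moreover have "(2::nat) ^ m < 2 ^ N" using Suc.prems(3) by simp
    ultimately show False using cD Suc.prems(2) by (simp add: full_row_rank_iff_card)
  qed
  then obtain v where v: "v \<in> D" "v \<notin> row_space m H" by auto
  have rows: "\<forall>r<Suc m. (H(m := v)) r \<in> D" using Suc.prems(1) v(1) by (auto simp: less_Suc_eq)
  obtain H' where "\<forall>r<Suc m. H' r = (H(m := v)) r" "\<forall>r<Suc m + j. H' r \<in> D"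
      "full_row_rank (Suc m + j) H'"
    using Suc.IH[OF rows full_row_rank_append[OF v(2) Suc.prems(2)]] Suc.prems(3) by auto
  then show ?case by (intro exI[of _ H']) auto
qed

lemma parity_check_matrix_extending:
  assumes code: "binary_linear_code n C" "card C = 2 ^ k"
    and sN: "s \<le> n - k" and rows: "\<forall>r<s. g r \<in> dual_code n C" and rank: "full_row_rank s g"
  shows "\<exists>H. parity_check_matrix n k C H \<and> (\<forall>r<s. H r = g r)"
proof -
  define N where "N = n - k"
  let ?D = "orth {..<n} C"
  have L: "subspace_on {..<n} C" by (rule binary_linear_code_subspace_on[OF code(1)])
  have LD: "subspace_on {..<n} ?D"
    by (rule subspace_on_orth) (use L in \<open>auto simp: subspace_on_def\<close>)
  have "s + (N - s) = N" using sN by (simp add: N_def)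
  then obtain H' where H': "\<forall>r<s. H' r = g r" "\<forall>r<N. H' r \<in> ?D" "full_row_rank N H'"
    using extend_independent_rows[OF _ LD card_dual_code(2)[OF code], of s g "N - s"]
      rows rank by (auto simp: N_def dual_code_eq_orth)
  define H where "H r = (if r < N then H' r else bzero)" for r
  have same: "row_space N H = row_space N H'" by (rule row_space_cong) (simp add: H_def)
  have rows_H: "\<forall>r<N. H r \<in> ?D" using H'(2) by (simp add: H_def)
  have "row_space N H = ?D"
  proof (rule card_subset_eq)
    show "finite ?D" by (rule subspace_on_finite[OF _ LD]) simp
    show "row_space N H \<subseteq> ?D" by (rule row_space_subset[OF LD rows_H])
    show "card (row_space N H) = card ?D"
      using same H'(3) card_dual_code(2)[OF code] by (simp add: full_row_rank_iff_card N_def)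
  qed
  moreover have "bmatrix N n H"
    unfolding bmatrix_def
  proof (intro allI impI)
    fix r j assume "N \<le> r \<or> n \<le> j"
    moreover have "H r \<in> vecs_on {..<n}" if "r < N"
      using rows_H LD that by (auto simp: subspace_on_def)
    ultimately show "\<not> H r j" by (auto simp: H_def bzero_def vecs_on_def)
  qed
  moreover have "full_row_rank N H" using same H'(3) by (simp add: full_row_rank_iff_card)
  ultimately have "parity_check_matrix n k C H"
    unfolding parity_check_matrix_def N_def[symmetric] by (simp add: dual_code_eq_orth)
  moreover have "\<forall>r<s. H r = g r" using H'(1) sN by (simp add: H_def N_def)
  ultimately show ?thesis by blast
qed

section \<open>Few coordinates see the whole dual space\<close>

definition restrict_to :: "nat set \<Rightarrow> (nat \<Rightarrow> bool) \<Rightarrow> nat \<Rightarrow> bool" where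
  "restrict_to T g = (\<lambda>j. j \<in> T \<and> g j)"

lemma subspace_on_restrict_to:
  assumes "subspace_on A D"
  shows "subspace_on T (restrict_to T ` D)"
  unfolding subspace_on_def
proof (intro conjI ballI)
  show "restrict_to T ` D \<subseteq> vecs_on T" by (auto simp: restrict_to_def vecs_on_def)
  have "restrict_to T bzero = bzero" by (auto simp: restrict_to_def bzero_def)
  then show "bzero \<in> restrict_to T ` D" using assms by (metis image_eqI subspace_on_def)
  fix x y assume "x \<in> restrict_to T ` D" "y \<in> restrict_to T ` D"
  then obtain gx gy where "gx \<in> D" "gy \<in> D" "x = restrict_to T gx" "y = restrict_to T gy" by auto
  moreover from this have "badd gx gy \<in> D" using assms by (auto simp: subspace_on_def)
  ultimately show "badd x y \<in> restrict_to T ` D"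
    by (intro image_eqI[of _ _ "badd gx gy"]) (auto simp: restrict_to_def badd_def)
qed

lemma subspace_on_eq_vecs_on:
  assumes fT: "finite T" and L: "subspace_on T P" and triv: "orth T P = {bzero}"
  shows "P = vecs_on T"
proof (rule card_subset_eq)
  show "finite (vecs_on T)" "P \<subseteq> vecs_on T" using card_vecs_on[OF fT] L by (auto simp: subspace_on_def)
  show "card P = card (vecs_on T)"
    using card_mult_card_orth[OF fT L] triv card_vecs_on[OF fT] by simp
qed

lemma orth_restrict_to:
  assumes "T \<subseteq> A" and z: "z \<in> orth T (restrict_to T ` D)"
  shows "z \<in> orth A D"
proof -
  have zT: "z i \<Longrightarrow> i \<in> T" for i using z by (auto simp: orth_def vecs_on_def)
  have "dot g z = dot (restrict_to T g) z" for g
    unfolding dot_def restrict_to_def using zT by metis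
  then show ?thesis using z assms(1) by (auto simp: orth_def vecs_on_def)
qed

text \<open>The classical fact that any d - 1 columns of a parity-check matrix are independent,
  in dual form: restricted to fewer than d coordinates, the dual code is everything.\<close>
lemma restrict_dual_code_surj:
  assumes C: "binary_linear_code n C" and dist: "\<forall>x\<in>C. x \<noteq> bzero \<longrightarrow> d \<le> hweight n x"
    and T: "T \<subseteq> {..<n}" "card T < d"
  shows "restrict_to T ` dual_code n C = vecs_on T"
proof -
  let ?P = "restrict_to T ` orth {..<n} C"
  have fT: "finite T" using T(1) finite_subset by blast
  have L: "subspace_on {..<n} C" by (rule binary_linear_code_subspace_on[OF C])
  have "subspace_on {..<n} (orth {..<n} C)"
    by (rule subspace_on_orth) (use L in \<open>auto simp: subspace_on_def\<close>)
  then have LP: "subspace_on T ?P" by (rule subspace_on_restrict_to)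
  have "z = bzero" if z: "z \<in> orth T ?P" for z
  proof (rule ccontr)
    assume nz: "z \<noteq> bzero"
    have "z \<in> C" using orth_restrict_to[OF T(1) z] orth_orth[OF _ L] by simp
    moreover have "hweight n z \<le> card T"
      unfolding hweight_def using z fT by (intro card_mono) (auto simp: orth_def vecs_on_def)
    ultimately show False using dist nz T(2) by fastforce
  qed
  moreover have "bzero \<in> orth T ?P"
    using subspace_on_orth[OF fT] LP by (auto simp: subspace_on_def)
  ultimately have "orth T ?P = {bzero}" by blast
  then show ?thesis
    using subspace_on_eq_vecs_on[OF fT LP] by (simp add: dual_code_eq_orth)
qed

lemma dual_code_unit_on:
  assumes "binary_linear_code n C" "\<forall>x\<in>C. x \<noteq> bzero \<longrightarrow> d \<le> hweight n x"
    and "T \<subseteq> {..<n}" "card T < d" and r: "r \<in> T"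
  shows "\<exists>g\<in>dual_code n C. \<forall>j\<in>T. g j = (j = r)"
proof -
  have "(\<lambda>j. j = r) \<in> vecs_on T" using r by (auto simp: vecs_on_def)
  then obtain g where "g \<in> dual_code n C" "restrict_to T g = (\<lambda>j. j = r)"
    using restrict_dual_code_surj[OF assms(1-4)] by (metis imageE)
  then show ?thesis by (metis restrict_to_def)
qed

lemma identity_block_full_row_rank:
  assumes id: "\<forall>r<s. \<forall>j<s. g r j = (j = r)"
  shows "full_row_rank s g"
  unfolding full_row_rank_def
proof (rule inj_onI)
  fix R1 R2 assume R: "R1 \<in> Pow {..<s}" "R2 \<in> Pow {..<s}" "row_sum g R1 = row_sum g R2"
  have sum_id: "row_sum g R j = (j \<in> R)" if "R \<subseteq> {..<s}" "j < s" for R j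
  proof -
    have block: "{r\<in>R. g r j} = R \<inter> {j}" using that id by auto
    show ?thesis unfolding row_sum_def block by (cases "j \<in> R") simp_all
  qed
  have "j \<in> R1 \<longleftrightarrow> j \<in> R2" if "j < s" for j
    using sum_id[of R1 j] sum_id[of R2 j] R that by auto
  then show "R1 = R2" using R(1,2) by blast
qed

section \<open>Moving a small set onto the identity block\<close>

lemma exists_superset_with_card:
  assumes "finite B" "I \<subseteq> B" "card I \<le> s" "s \<le> card B"
  shows "\<exists>X. I \<subseteq> X \<and> X \<subseteq> B \<and> card X = s"
proof -
  have fI: "finite I" using assms(1,2) finite_subset by blast
  have "s - card I \<le> card (B - I)" using assms fI by (simp add: card_Diff_subset)
  then obtain T where T: "T \<subseteq> B - I" "card T = s - card I" "finite T"
    by (rule obtain_subset_with_card_n)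
  have "card (I \<union> T) = s" using T fI assms(3) by (subst card_Un_disjoint) auto
  then show ?thesis using T assms(2) by (intro exI[of _ "I \<union> T"]) auto
qed

lemma transitive_onto_initial_segment:
  assumes tr: "t_transitive n s G" and X: "X \<subseteq> {..<n}" "card X = s"
  shows "\<exists>\<pi>\<in>G. \<pi> ` X = {..<s}"
proof -
  have fX: "finite X" using X(1) finite_subset by blast
  have "s \<le> n" using card_mono[OF _ X(1)] X(2) by simp
  then obtain \<pi> where \<pi>: "\<pi> \<in> G" "map \<pi> (sorted_list_of_set X) = [0..<s]"
    using tr fX X unfolding t_transitive_def
    by (metis atLeast_upt distinct_upt distinct_sorted_list_of_set length_upt
        length_sorted_list_of_set lessThan_subset_iff minus_nat.diff_0 set_sorted_list_of_set)
  have "\<pi> ` X = set (map \<pi> (sorted_list_of_set X))" using fX by simp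
  then have "\<pi> ` X = {..<s}" using \<pi>(2) by (simp add: atLeast_upt)
  then show ?thesis using \<pi>(1) by blast
qed

lemma identity_block_not_stopping:
  assumes id: "\<forall>r<s. \<forall>j<s. H r j = (j = r)" and sm: "s \<le> m"
    and I: "I \<subseteq> {..<s}" "I \<noteq> {}"
  shows "\<not> stopping_set m H I"
proof -
  obtain r where r: "r \<in> I" using I(2) by blast
  then have "{j\<in>I. H r j} = {r}" using I(1) id by auto
  then have "resolves H r I" using I(2) by (simp add: resolves_def)
  moreover have "r < m" using r I(1) sm by auto
  ultimately show ?thesis unfolding stopping_set_def by blast
qed

lemma identity_block_covers:
  assumes block: "\<forall>r<s. \<forall>j<s. H r j = (j = r)" and tr: "t_transitive n s G"
    and sm: "s \<le> m" and sn: "s \<le> n"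
    and I: "I \<subseteq> {..<n}" "1 \<le> card I" "card I \<le> s"
  shows "\<exists>\<pi>\<in>G. \<not> stopping_set m H (\<pi> ` I)"
proof -
  obtain X where X: "I \<subseteq> X" "X \<subseteq> {..<n}" "card X = s"
    using exists_superset_with_card[of "{..<n}" I s] I sn by auto
  then obtain \<pi> where "\<pi> \<in> G" "\<pi> ` X = {..<s}"
    using transitive_onto_initial_segment[OF tr] by blast
  moreover have "I \<noteq> {}" using I(2) by auto
  ultimately show ?thesis
    using identity_block_not_stopping[OF block sm, of "\<pi> ` I"] X(1) by blast
qed

lemma SAD_set_exists:
  assumes "SAD_covers n k H b (Aut n C)"
  shows "\<exists>S. is_SAD_set n k C H b S"
proof -
  let ?P = "\<lambda>S. S \<subseteq> Aut n C \<and> SAD_covers n k H b S"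
  obtain S where "?P S" "\<forall>S'. ?P S' \<longrightarrow> card S \<le> card S'"
    using ex_has_least_nat[of ?P "Aut n C" card] assms by blast
  then show ?thesis unfolding is_SAD_set_def by blast
qed

theorem lemma5:
  fixes n k d s :: nat and C :: "(nat \<Rightarrow> bool) set"
  assumes "is_nkd_code n k d C"
    and "1 \<le> s" and "s \<le> d - 1" and "s \<le> n - k"
    and "t_transitive n s (Aut n C)"
  shows "\<exists>H. parity_check_matrix n k C H \<and>
           (\<forall>b\<le>s. \<forall>I. I \<subseteq> {..<n} \<and> 1 \<le> card I \<and> card I \<le> b \<longrightarrow>
               (\<exists>\<pi>\<in>Aut n C. \<not> stopping_set (n - k) H (\<pi> ` I))) \<and>
           (\<forall>b\<le>s. \<exists>S. is_SAD_set n k C H b S)"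
proof -
  note code = assms(1)[unfolded is_nkd_code_def]
  have sd: "card {..<s} < d" using assms(2,3) by simp
  have sn: "s \<le> n" using assms(4) by simp
  then have prefix: "{..<s} \<subseteq> {..<n}" by auto
  have "\<exists>g\<in>dual_code n C. \<forall>j\<in>{..<s}. g j = (j = r)" if "r < s" for r
    using dual_code_unit_on[OF _ _ prefix sd] code that by blast
  then obtain g where g: "\<And>r. r < s \<Longrightarrow> g r \<in> dual_code n C \<and> (\<forall>j<s. g r j = (j = r))"
    by (metis lessThan_iff)
  then obtain H where H: "parity_check_matrix n k C H" "\<forall>r<s. H r = g r"
    using parity_check_matrix_extending[of n C k s g] code assms(4)
      identity_block_full_row_rank[of s g] by blast
  have block: "\<forall>r<s. \<forall>j<s. H r j = (j = r)" using H(2) g by simp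
  have cover: "\<exists>\<pi>\<in>Aut n C. \<not> stopping_set (n - k) H (\<pi> ` I)"
    if "I \<subseteq> {..<n}" "1 \<le> card I" "card I \<le> s" for I
    using identity_block_covers[OF block assms(5) assms(4) sn] that by blast
  have "SAD_covers n k H b (Aut n C)" if "b \<le> s" for b
    unfolding SAD_covers_def using cover that by auto
  then have "\<forall>b\<le>s. \<exists>S. is_SAD_set n k C H b S" using SAD_set_exists by blast
  moreover have "\<forall>b\<le>s. \<forall>I. I \<subseteq> {..<n} \<and> 1 \<le> card I \<and> card I \<le> b \<longrightarrow>
      (\<exists>\<pi>\<in>Aut n C. \<not> stopping_set (n - k) H (\<pi> ` I))"
    using cover by auto
  ultimately show ?thesis using H(1) by blast
qed

end
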